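(* Let $G = (X\dot\cup Y,E)$ be a $k$-regular bipartite graph on $2n$ vertices, let $c>0$, and let $(S_1,T_1)$ and $(S_2,T_2)$ be two $c$-internal cuts. Then $d((S_1,T_1),(S_2,T_2)) \le \frac{40cn}{\log n}$ or $d((S_1,T_1),(S_2,T_2)) \ge k/10$.
   Context: A cut in $G$ is a pair $(S,T)$ with $S\subseteq X$, $T\subseteq Y$; write $S^c = X\setminus S$, $T^c=Y\setminus T$. The cross edges with respect to $(S,T)$ are the edges joining $S$ to $T^c$ or $S^c$ to $T$. A cut is $c$-internal if it has at most $4cnk/\log n$ cross edges. $d((S_1,T_1),(S_2,T_2)) = |S_1\setminus S_2|+|S_2\setminus S_1|+|T_1\setminus T_2|+|T_2\setminus T_1|$. $\log$ is the natural logarithm. *)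

theory Defs
  imports Complex_Main
begin

text \<open>A bipartite graph with (disjoint) parts X and Y is given by an edge set
  E \<subseteq> X \<times> Y; the pair (x,y) stands for the edge joining x and y.\<close>

definition k_regular_bipartite :: "'a set \<Rightarrow> 'a set \<Rightarrow> ('a \<times> 'a) set \<Rightarrow> nat \<Rightarrow> bool" where
  "k_regular_bipartite X Y E k \<longleftrightarrow>
     finite X \<and> finite Y \<and> X \<inter> Y = {} \<and> E \<subseteq> X \<times> Y \<and>
     (\<forall>x\<in>X. card {y. (x, y) \<in> E} = k) \<and>
     (\<forall>y\<in>Y. card {x. (x, y) \<in> E} = k)"

definition is_cut :: "'a set \<Rightarrow> 'a set \<Rightarrow> 'a set \<Rightarrow> 'a set \<Rightarrow> bool" where
  "is_cut X Y S T \<longleftrightarrow> S \<subseteq> X \<and> T \<subseteq> Y"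

definition cross_edges :: "'a set \<Rightarrow> 'a set \<Rightarrow> ('a \<times> 'a) set \<Rightarrow> 'a set \<Rightarrow> 'a set \<Rightarrow> ('a \<times> 'a) set" where
  "cross_edges X Y E S T =
     {(x, y) \<in> E. (x \<in> S \<and> y \<in> Y - T) \<or> (x \<in> X - S \<and> y \<in> T)}"

definition c_internal :: "real \<Rightarrow> nat \<Rightarrow> nat \<Rightarrow> 'a set \<Rightarrow> 'a set \<Rightarrow> ('a \<times> 'a) set \<Rightarrow> 'a set \<Rightarrow> 'a set \<Rightarrow> bool" where
  "c_internal c n k X Y E S T \<longleftrightarrow>
     is_cut X Y S T \<and>
     real (card (cross_edges X Y E S T)) \<le> 4 * c * real n * real k / ln (real n)"

definition cut_dist :: "'a set \<Rightarrow> 'a set \<Rightarrow> 'a set \<Rightarrow> 'a set \<Rightarrow> nat" where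
  "cut_dist S1 T1 S2 T2 =
     card (S1 - S2) + card (S2 - S1) + card (T1 - T2) + card (T2 - T1)"

end

theory Submission
  imports Defs
begin

text \<open>Put \<open>A = S\<^sub>1 \<triangle> S\<^sub>2\<close> and \<open>B = T\<^sub>1 \<triangle> T\<^sub>2\<close>, so that \<open>d = |A| + |B|\<close>.
  An edge with exactly one endpoint in \<open>A \<union> B\<close> crosses one of the two cuts, and by
  regularity there are at least \<open>|A|(k - |B|) + |B|(k - |A|) \<ge> d(k - d)\<close> such edges.
  Hence \<open>d(k - d) \<le> 8cnk/log n\<close>, and if \<open>d < k/10\<close> this forces \<open>d \<le> (80/9) cn/log n\<close>.\<close>

lemma card_sym_diff:
  assumes "finite A" "finite B"
  shows "card (sym_diff A B) = card (A - B) + card (B - A)"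
  using assms by (intro card_Un_disjoint) auto

lemma cut_dist_eq_card_sym_diff:
  assumes "finite S1" "finite S2" "finite T1" "finite T2"
  shows "cut_dist S1 T1 S2 T2 = card (sym_diff S1 S2) + card (sym_diff T1 T2)"
  using assms by (simp add: cut_dist_def card_sym_diff)

lemma mem_cross_edges_iff:
  assumes "E \<subseteq> X \<times> Y" "(x, y) \<in> E"
  shows "(x, y) \<in> cross_edges X Y E S T \<longleftrightarrow> (x \<in> S) \<noteq> (y \<in> T)"
  using assms by (auto simp: cross_edges_def)

lemma edges_across_sym_diff_subset_cross_edges:
  assumes "E \<subseteq> X \<times> Y"
  shows "{(x, y) \<in> E. (x \<in> sym_diff S1 S2) \<noteq> (y \<in> sym_diff T1 T2)}
           \<subseteq> cross_edges X Y E S1 T1 \<union> cross_edges X Y E S2 T2"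
  using mem_cross_edges_iff[OF assms] by blast

lemma card_edges_leaving_ge:
  assumes "finite A" "finite B"
    and "\<And>x. x \<in> A \<Longrightarrow> finite (R `` {x})"
    and "\<And>x. x \<in> A \<Longrightarrow> card (R `` {x}) = k"
  shows "card A * (k - card B) \<le> card {(x, y) \<in> R. x \<in> A \<and> y \<notin> B}"
proof -
  have "{(x, y) \<in> R. x \<in> A \<and> y \<notin> B} = (SIGMA x:A. R `` {x} - B)"
    by auto
  then have "card {(x, y) \<in> R. x \<in> A \<and> y \<notin> B} = (\<Sum>x\<in>A. card (R `` {x} - B))"
    using assms(1,3) by simp
  also have "\<dots> \<ge> (\<Sum>x\<in>A. k - card B)"
    using diff_card_le_card_Diff[OF assms(2)] assms(4) by (intro sum_mono) metis
  finally show ?thesis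
    by simp
qed

lemma regular_bipartite_card_edges_across_ge:
  assumes "k_regular_bipartite X Y E k" "A \<subseteq> X" "B \<subseteq> Y"
  shows "card A * (k - card B) + card B * (k - card A)
           \<le> card {(x, y) \<in> E. (x \<in> A) \<noteq> (y \<in> B)}"
proof -
  have fin: "finite X" "finite Y" and E: "E \<subseteq> X \<times> Y"
    and deg_X: "\<And>x. x \<in> X \<Longrightarrow> card (E `` {x}) = k"
    and deg_Y: "\<And>y. y \<in> Y \<Longrightarrow> card (E\<inverse> `` {y}) = k"
    using assms(1) by (auto simp: k_regular_bipartite_def Image_singleton)
  have "finite E"
    using E fin finite_subset by blast
  then have fin_E: "finite {(x, y) \<in> E. P x y}" for P
    by (rule finite_subset[rotated]) auto
  have fin_A: "finite A" and fin_B: "finite B"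
    using assms(2,3) fin finite_subset by auto
  have "card A * (k - card B) \<le> card {(x, y) \<in> E. x \<in> A \<and> y \<notin> B}"
    using E fin_A fin_B deg_X assms(2)
    by (intro card_edges_leaving_ge) (auto intro: finite_subset[OF _ fin(2)])
  moreover have "card B * (k - card A) \<le> card {(y, x) \<in> E\<inverse>. y \<in> B \<and> x \<notin> A}"
    using E fin_A fin_B deg_Y assms(3)
    by (intro card_edges_leaving_ge) (auto intro: finite_subset[OF _ fin(1)])
  moreover have "{(y, x) \<in> E\<inverse>. y \<in> B \<and> x \<notin> A} = {(x, y) \<in> E. x \<notin> A \<and> y \<in> B}\<inverse>"
    by auto
  moreover have "{(x, y) \<in> E. (x \<in> A) \<noteq> (y \<in> B)}
                   = {(x, y) \<in> E. x \<in> A \<and> y \<notin> B} \<union> {(x, y) \<in> E. x \<notin> A \<and> y \<in> B}"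
    by auto
  ultimately show ?thesis
    by (simp add: card_Un_disjoint fin_E disjoint_iff)
qed

lemma two_cuts_card_cross_edges_ge:
  assumes "k_regular_bipartite X Y E k" "is_cut X Y S1 T1" "is_cut X Y S2 T2"
  defines "d \<equiv> real (cut_dist S1 T1 S2 T2)"
  shows "d * (real k - d)
           \<le> real (card (cross_edges X Y E S1 T1) + card (cross_edges X Y E S2 T2))"
proof -
  have fin: "finite X" "finite Y" and E: "E \<subseteq> X \<times> Y"
    using assms(1) by (auto simp: k_regular_bipartite_def)
  have cuts: "S1 \<subseteq> X" "S2 \<subseteq> X" "T1 \<subseteq> Y" "T2 \<subseteq> Y"
    using assms(2,3) by (auto simp: is_cut_def)
  define a where "a = card (sym_diff S1 S2)"
  define b where "b = card (sym_diff T1 T2)"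
  have d: "d = real a + real b"
    using cuts fin finite_subset
    unfolding d_def a_def b_def by (subst cut_dist_eq_card_sym_diff) auto
  have truncate: "real x * (real k - real y) \<le> real (x * (k - y))" for x y
    by (cases "y \<le> k") (auto simp: of_nat_diff mult_nonneg_nonpos)
  have fin_cross: "finite (cross_edges X Y E S T)" for S T
    using E fin by (auto simp: cross_edges_def intro: finite_subset[of _ "X \<times> Y"])
  have "d * (real k - d) \<le> real a * (real k - real b) + real b * (real k - real a)"
    unfolding d by (simp add: algebra_simps)
  also have "\<dots> \<le> real (a * (k - b) + b * (k - a))"
    using add_mono[OF truncate truncate] by simp
  also have "\<dots> \<le> real (card {(x, y) \<in> E. (x \<in> sym_diff S1 S2) \<noteq> (y \<in> sym_diff T1 T2)})"
    unfolding a_def b_def of_nat_le_iff using cuts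
    by (intro regular_bipartite_card_edges_across_ge[OF assms(1)]) auto
  also have "\<dots> \<le> real (card (cross_edges X Y E S1 T1 \<union> cross_edges X Y E S2 T2))"
    unfolding of_nat_le_iff using fin_cross
    by (intro card_mono edges_across_sym_diff_subset_cross_edges[OF E]) auto
  also have "\<dots> \<le> real (card (cross_edges X Y E S1 T1) + card (cross_edges X Y E S2 T2))"
    unfolding of_nat_le_iff by (rule card_Un_le)
  finally show ?thesis .
qed

lemma small_or_large_of_mult_diff_le:
  fixes d k M :: real
  assumes "0 \<le> d" "d * (k - d) \<le> M * k"
  shows "d \<le> 10 / 9 * M \<or> k / 10 \<le> d"
proof (rule disjCI)
  assume "\<not> k / 10 \<le> d"
  then have "k > 0" "0 \<le> d * (k / 10 - d)"
    using assms(1) by auto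
  then have "9 / 10 * d * k \<le> d * (k - d)"
    by (simp add: algebra_simps)
  then have "(9 / 10 * d) * k \<le> M * k"
    using assms(2) by linarith
  with \<open>k > 0\<close> show "d \<le> 10 / 9 * M"
    by simp
qed

theorem claim2p6:
  fixes X Y :: "'a set" and E :: "('a \<times> 'a) set" and n k :: nat and c :: real
    and S1 T1 S2 T2 :: "'a set"
  assumes "k_regular_bipartite X Y E k"
    and "card X + card Y = 2 * n"
    and "c > 0"
    and "c_internal c n k X Y E S1 T1"
    and "c_internal c n k X Y E S2 T2"
  shows "real (cut_dist S1 T1 S2 T2) \<le> 40 * c * real n / ln (real n)
         \<or> real (cut_dist S1 T1 S2 T2) \<ge> real k / 10"
proof -
  define M where "M = 8 * c * real n / ln (real n)"
  have "0 \<le> M"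
    using \<open>c > 0\<close> by (cases "n = 0") (auto simp: M_def)
  have "real (cut_dist S1 T1 S2 T2) * (real k - real (cut_dist S1 T1 S2 T2))
          \<le> real (card (cross_edges X Y E S1 T1) + card (cross_edges X Y E S2 T2))"
    using assms(1,4,5) by (intro two_cuts_card_cross_edges_ge) (auto simp: c_internal_def)
  also have "\<dots> \<le> M * real k"
    using add_mono[OF assms(4,5)[unfolded c_internal_def, THEN conjunct2]]
    by (simp add: M_def ac_simps)
  finally have "real (cut_dist S1 T1 S2 T2) \<le> 10 / 9 * M
                \<or> real k / 10 \<le> real (cut_dist S1 T1 S2 T2)"
    by (intro small_or_large_of_mult_diff_le) auto
  moreover have "10 / 9 * M \<le> 40 * c * real n / ln (real n)"
    using \<open>0 \<le> M\<close> by (simp add: M_def)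
  ultimately show ?thesis
    by linarith
qed

end
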